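(* Let $G$ be a group and $H\subseteq G$ a subgroup with weak $n$-paradoxical towers for some $n\in\mathbb N$. Then $G$ has weak $n$-paradoxical towers.
   Context: For $n\in\mathbb N$, a group $G$ has weak $n$-paradoxical towers if for every $m\in\mathbb N$ there exist a finite subset $D\subseteq G$ with $|D|\ge m$, subsets $K_1,\dots,K_n\subseteq G$ and elements $g_1,\dots,g_n\in G$ such that for each $j$ the sets $\{dK_j\}_{d\in D}$ are pairwise disjoint, and $\bigcup_{j=1}^n g_jK_j=G$. *)

theory Defs
  imports "HOL-Algebra.Coset"
begin

definition weak_paradoxical_towers :: "('a, 'b) monoid_scheme \<Rightarrow> nat \<Rightarrow> bool" where
  "weak_paradoxical_towers G n \<longleftrightarrow>
     (\<forall>m::nat. \<exists>(D::'a set) (K::nat \<Rightarrow> 'a set) (g::nat \<Rightarrow> 'a).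
        finite D \<and> D \<subseteq> carrier G \<and> card D \<ge> m \<and>
        (\<forall>j<n. K j \<subseteq> carrier G \<and> g j \<in> carrier G) \<and>
        (\<forall>j<n. \<forall>d\<in>D. \<forall>d'\<in>D. d \<noteq> d' \<longrightarrow>
             (d <#\<^bsub>G\<^esub> K j) \<inter> (d' <#\<^bsub>G\<^esub> K j) = {}) \<and>
        (\<Union>j<n. g j <#\<^bsub>G\<^esub> K j) = carrier G)"

end

theory Submission
  imports Defs
begin

text \<open>Pick a right transversal \<open>T\<close> of \<open>H\<close> in \<open>G\<close>, so that every element of \<open>G\<close> is uniquely
  of the form \<open>h t\<close> with \<open>h \<in> H\<close>, \<open>t \<in> T\<close>. Given towers \<open>D, K\<^sub>j, g\<^sub>j\<close> in \<open>H\<close>, keep \<open>D\<close> and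
  \<open>g\<^sub>j\<close> and replace \<open>K\<^sub>j\<close> by \<open>K\<^sub>j T\<close>: the translates \<open>g\<^sub>j K\<^sub>j T\<close> cover \<open>H T = G\<close>, and
  \<open>d K\<^sub>j T\<close>, \<open>d' K\<^sub>j T\<close> stay disjoint because, by uniqueness of the factorisation, \<open>h t\<close> lies
  in both only if \<open>h\<close> lies in both \<open>d K\<^sub>j\<close> and \<open>d' K\<^sub>j\<close>.\<close>

definition right_transversal :: "('a, 'b) monoid_scheme \<Rightarrow> 'a set \<Rightarrow> 'a set \<Rightarrow> bool" where
  "right_transversal G H T \<longleftrightarrow>
     T \<subseteq> carrier G \<and> (\<forall>C \<in> rcosets\<^bsub>G\<^esub> H. \<exists>!t. t \<in> T \<inter> C)"

lemma (in group) right_transversal_exists: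
  assumes "subgroup H G"
  shows "\<exists>T. right_transversal G H T"
proof -
  define T where "T = (\<lambda>C. SOME t. t \<in> C) ` (rcosets H)"
  have choice_in: "(SOME t. t \<in> C) \<in> C" if "C \<in> rcosets H" for C
    using subgroup.rcosets_non_empty[OF assms that] by (simp add: some_in_eq)
  have T_carrier: "T \<subseteq> carrier G"
    using choice_in subgroup.rcosets_carrier[OF assms is_group] unfolding T_def by blast
  have unique: "\<exists>!t. t \<in> T \<inter> C" if C: "C \<in> rcosets H" for C
  proof
    show "(SOME t. t \<in> C) \<in> T \<inter> C"
      using choice_in[OF C] C unfolding T_def by blast
  next
    fix t assume "t \<in> T \<inter> C"
    then obtain C' where C': "C' \<in> rcosets H" "t = (SOME t. t \<in> C')" "t \<in> C"
      unfolding T_def by blast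
    have "C' = C"
      using rcos_disjoint[OF assms] C C' choice_in[OF C'(1)]
      unfolding pairwise_def disjnt_def by blast
    then show "t = (SOME t. t \<in> C)" using C' by simp
  qed
  have "right_transversal G H T"
    unfolding right_transversal_def by (intro conjI ballI T_carrier unique)
  then show ?thesis ..
qed

lemma (in group) right_transversal_set_mult_eq:
  assumes H: "subgroup H G" and T: "right_transversal G H T"
  shows "H <#> T = carrier G"
proof
  show "H <#> T \<subseteq> carrier G"
    using T subgroup.subset[OF H] unfolding right_transversal_def by (simp add: set_mult_closed)
next
  show "carrier G \<subseteq> H <#> T"
  proof
    fix x assume x: "x \<in> carrier G"
    obtain t where "t \<in> T" "t \<in> H #> x"
      using T rcosetsI[OF subgroup.subset[OF H] x] unfolding right_transversal_def by blast
    then obtain h where h: "h \<in> H" "t = h \<otimes> x" "t \<in> T"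
      unfolding r_coset_def by blast
    have "x = inv h \<otimes> t"
      using h x H by (simp add: inv_solve_left subgroup.mem_carrier)
    then show "x \<in> H <#> T"
      using h H unfolding set_mult_def by (blast intro: subgroup.m_inv_closed)
  qed
qed

lemma (in group) right_transversal_cancel:
  assumes H: "subgroup H G" and T: "right_transversal G H T"
    and "h \<in> H" "h' \<in> H" "t \<in> T" "t' \<in> T" and eq: "h \<otimes> t = h' \<otimes> t'"
  shows "t = t'"
proof -
  have carrier: "h \<in> carrier G" "h' \<in> carrier G" "t \<in> carrier G" "t' \<in> carrier G"
    using assms T subgroup.mem_carrier[OF H] unfolding right_transversal_def by auto
  have "t' = (inv h' \<otimes> h) \<otimes> t"
    using eq carrier by (simp add: inv_solve_left m_assoc)
  then have "t' \<in> H #> t"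
    using assms carrier subgroup.subset[OF H]
    by (metis rcosI subgroup.m_closed subgroup.m_inv_closed)
  moreover have "t \<in> H #> t" using rcos_self[OF carrier(3) H] .
  moreover have "H #> t \<in> rcosets H"
    using rcosetsI[OF subgroup.subset[OF H] carrier(3)] .
  ultimately show ?thesis
    using T \<open>t \<in> T\<close> \<open>t' \<in> T\<close> unfolding right_transversal_def by blast
qed

lemma (in group) right_transversal_set_mult_disjoint:
  assumes H: "subgroup H G" and T: "right_transversal G H T"
    and "A \<subseteq> H" "B \<subseteq> H" "A \<inter> B = {}"
  shows "(A <#> T) \<inter> (B <#> T) = {}"
proof -
  have "a = b" if "a \<in> A" "b \<in> B" "t \<in> T" "t' \<in> T" "a \<otimes> t = b \<otimes> t'" for a b t t'
  proof -
    have "t = t'" using right_transversal_cancel[OF H T] that assms by blast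
    then show "a = b"
      using that assms T subgroup.mem_carrier[OF H] unfolding right_transversal_def
      by (meson right_cancel subsetD)
  qed
  then show ?thesis using assms unfolding set_mult_def by blast
qed

lemma (in group) l_coset_set_mult_right_transversal_disjoint:
  assumes H: "subgroup H G" and T: "right_transversal G H T"
    and "K \<subseteq> H" "d \<in> H" "d' \<in> H" and disjoint: "(d <# K) \<inter> (d' <# K) = {}"
  shows "(d <# (K <#> T)) \<inter> (d' <# (K <#> T)) = {}"
proof -
  have "d <# K \<subseteq> H" "d' <# K \<subseteq> H"
    using assms unfolding l_coset_def by (auto intro: subgroup.m_closed[OF H])
  moreover have "K \<subseteq> carrier G" "d \<in> carrier G" "d' \<in> carrier G" "T \<subseteq> carrier G"
    using assms subgroup.subset[OF H] unfolding right_transversal_def by auto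
  then have "d <# (K <#> T) = (d <# K) <#> T" "d' <# (K <#> T) = (d' <# K) <#> T"
    by (simp_all add: setmult_lcos_assoc)
  ultimately show ?thesis
    using right_transversal_set_mult_disjoint[OF H T] disjoint by simp
qed

lemma (in group) UN_l_coset_set_mult:
  assumes "\<And>j. j \<in> J \<Longrightarrow> g j \<in> carrier G \<and> K j \<subseteq> carrier G" and "T \<subseteq> carrier G"
  shows "(\<Union>j\<in>J. g j <# (K j <#> T)) = (\<Union>j\<in>J. g j <# K j) <#> T"
proof -
  have "g j <# (K j <#> T) = (g j <# K j) <#> T" if "j \<in> J" for j
    using setmult_lcos_assoc assms that by simp
  then show ?thesis unfolding set_mult_def by auto
qed

lemma (in group) weak_paradoxical_towers_of_subgroup:
  assumes H: "subgroup H G" and towers: "weak_paradoxical_towers (G\<lparr>carrier := H\<rparr>) n"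
  shows "weak_paradoxical_towers G n"
  unfolding weak_paradoxical_towers_def
proof
  fix m
  have H_carrier: "H \<subseteq> carrier G" using subgroup.subset[OF H] .
  obtain T where T: "right_transversal G H T" using right_transversal_exists[OF H] ..
  have T_carrier: "T \<subseteq> carrier G" using T unfolding right_transversal_def by blast
  obtain D K g where D: "finite D" "D \<subseteq> H" "card D \<ge> m"
    and Kg: "\<forall>j<n. K j \<subseteq> H \<and> g j \<in> H"
    and disj: "\<forall>j<n. \<forall>d\<in>D. \<forall>d'\<in>D. d \<noteq> d' \<longrightarrow> (d <# K j) \<inter> (d' <# K j) = {}"
    and cover: "(\<Union>j<n. g j <# K j) = H"
    using towers[unfolded weak_paradoxical_towers_def, rule_format, of m] by force
  have carrier: "K j \<subseteq> carrier G" "g j \<in> carrier G" if "j < n" for j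
    using Kg that H_carrier by auto
  have disjoint: "(d <# (K j <#> T)) \<inter> (d' <# (K j <#> T)) = {}"
    if "j < n" "d \<in> D" "d' \<in> D" "d \<noteq> d'" for j d d'
    by (rule l_coset_set_mult_right_transversal_disjoint[OF H T]) (use Kg D disj that in auto)
  have "(\<Union>j<n. g j <# (K j <#> T)) = (\<Union>j<n. g j <# K j) <#> T"
    using carrier T_carrier by (intro UN_l_coset_set_mult) auto
  also have "\<dots> = carrier G"
    using cover right_transversal_set_mult_eq[OF H T] by simp
  finally have covering: "(\<Union>j<n. g j <# (K j <#> T)) = carrier G" .
  have closed: "K j <#> T \<subseteq> carrier G" if "j < n" for j
    using set_mult_closed[OF carrier(1)[OF that] T_carrier] .
  show "\<exists>D K g. finite D \<and> D \<subseteq> carrier G \<and> card D \<ge> m \<and>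
      (\<forall>j<n. K j \<subseteq> carrier G \<and> g j \<in> carrier G) \<and>
      (\<forall>j<n. \<forall>d\<in>D. \<forall>d'\<in>D. d \<noteq> d' \<longrightarrow> (d <# K j) \<inter> (d' <# K j) = {}) \<and>
      (\<Union>j<n. g j <# K j) = carrier G"
  proof (intro exI[where x = D] exI[where x = "\<lambda>j. K j <#> T"] exI[where x = g] conjI)
    show "finite D" "D \<subseteq> carrier G" "card D \<ge> m" using D H_carrier by auto
  qed (use carrier(2) disjoint covering closed in auto)
qed

theorem proposition3p12:
  fixes G :: "('a, 'b) monoid_scheme" and H :: "'a set" and n :: nat
  assumes "group G"
    and "subgroup H G"
    and "weak_paradoxical_towers (G\<lparr>carrier := H\<rparr>) n"
  shows "weak_paradoxical_towers G n"
  using group.weak_paradoxical_towers_of_subgroup[OF assms] .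

end
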